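(* Let $(X,d,\mu)$, $p$, $\underline{Q}_\mu$ be as in the context. Fix $\underline{\theta}\in[0,\min\{p,\underline{Q}_\mu\})$, $\theta\in[\underline{\theta},p)$, an integer $N\ge2$, numbers $0\le\theta_1<\dots<\theta_N=\underline{\theta}$, closed sets $S^i\in\mathcal{ADR}_{\theta_i}(X)$, and $\mathfrak m_k:=\sum_{i=1}^N2^{k(\theta-\theta_i)}\mathcal H_{\theta_i}\lfloor_{S^i}$, $k\in\mathbb N_0$. Then for each $c\ge1$ there is a constant $C>0$ such that for all $i,j\in\{1,\dots,N\}$, all $k\in\mathbb N_0$, all $(y,z)\in\Sigma^{i,j}_k$ and every $f\in L^{loc}_1(\mathfrak m_0)$, $$A^{i,j}_k(f)(y,z)\le C\,\mathcal E_{\mathfrak m_k}(f,B)$$ for every ball $B=cB_k(\underline x)$, $\underline x\in X$, satisfying $B\supset B_k(y)$ and $B\supset B_k(z)$.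
   Context: Standing setting: $(X,d)$ complete separable metric space, $\mu$ a Borel regular locally finite outer measure, $\operatorname{supp}\mu=X$, uniformly locally doubling (for every $R>0$, $\sup_{r\in(0,R]}\sup_x\mu(B_{2r}(x))/\mu(B_r(x))<\infty$). Balls are closed, $B_r(x)=\{y:d(x,y)\le r\}$, $cB_r(x)=B_{cr}(x)$, $B_k(x)=B_{2^{-k}}(x)$. A fixed $p\in(1,\infty)$; $X$ supports a weak local $(1,p)$-Poincaré inequality (for every $R>0$ there are $C,\lambda\ge1$ with $\inf_c\frac{1}{\mu(B_r(x))}\int_{B_r(x)}|f-c|d\mu\le Cr(\frac{1}{\mu(B_{\lambda r}(x))}\int_{B_{\lambda r}(x)}(\operatorname{lip}f)^pd\mu)^{1/p}$ for Lipschitz $f$, $x\in X$, $r\in(0,R]$). $\underline{Q}_\mu$ is the infimum of $Q>0$ such that for every $R>0$ there is $C$ with $(r_{B'}/r_B)^Q\le C\mu(B')/\mu(B)$ for balls $B'\subset B$, $0<r_{B'}\le r_B\le R$. Notation: $\mathrm{Av}_{G,\mathfrak m}(g)=\mathfrak m(G)^{-1}\int_Gg\,d\mathfrak m$ if $\mathfrak m(G)>0$, else $0$; $\mathcal E_{\mathfrak m}(g,G):=\inf_{c\in\mathbb R}\mathrm{Av}_{G,\mathfrak m}(|g-c|)$; $\mathfrak m\lfloor_S(E)=\mathfrak m(E\cap S)$. $\mathcal H_{\vartheta,\delta}(E):=\inf\{\sum\mu(B_{r_i}(x_i))r_i^{-\vartheta}:E\subset\bigcup B_{r_i}(x_i),0<r_i<\delta\}$,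 $\mathcal H_\vartheta=\lim_{\delta\to0}\mathcal H_{\vartheta,\delta}$. $\mathcal{ADR}_\vartheta(X)$: closed $S'$ with $\varkappa_1\mu(B_r(x))r^{-\vartheta}\le\mathcal H_\vartheta(B_r(x)\cap S')\le\varkappa_2\mu(B_r(x))r^{-\vartheta}$ for $x\in S'$, $r\in(0,1]$. $\Sigma^{i,j}_k:=\{(y,z)\in S^i\times S^j:d(y,z)\le2^{-k}\}$; $A^{i,j}_k(f)(y,z):=\mathrm{Av}_{B_k(y)\cap S^i,\mathcal H_{\theta_i}}\mathrm{Av}_{B_k(z)\cap S^j,\mathcal H_{\theta_j}}|f(y')-f(z')|$ (double mean over $y'$ and $z'$). *)

theory Defs
  imports "HOL-Analysis.Analysis"
begin

text \<open>The space X is the type 'a (class polish_space = complete separable metric space).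
  Balls are closed: cball x r. The measure mu is a measure on the Borel sets.\<close>

definition loc_finite_full_support :: "'a::metric_space measure \<Rightarrow> bool" where
  "loc_finite_full_support \<mu> \<longleftrightarrow> sets \<mu> = sets borel \<and>
     (\<forall>x. \<exists>r>0. emeasure \<mu> (cball x r) < \<infinity>) \<and>
     (\<forall>x r. r > 0 \<longrightarrow> emeasure \<mu> (cball x r) > 0)"

definition unif_loc_doubling :: "'a::metric_space measure \<Rightarrow> bool" where
  "unif_loc_doubling \<mu> \<longleftrightarrow> (\<forall>R>0. \<exists>D. \<forall>r x. 0 < r \<and> r \<le> R \<longrightarrow>
      emeasure \<mu> (cball x (2*r)) \<le> ennreal D * emeasure \<mu> (cball x r))"

text \<open>Mean value (with the convention Av = 0 if the measure of G is 0).\<close>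
definition Av :: "'a measure \<Rightarrow> 'a set \<Rightarrow> ('a \<Rightarrow> real) \<Rightarrow> real" where
  "Av M G g = (if emeasure M G > 0 then (\<integral>x. indicator G x * g x \<partial>M) / measure M G else 0)"

definition Osc :: "'a measure \<Rightarrow> ('a \<Rightarrow> real) \<Rightarrow> 'a set \<Rightarrow> real" where
  "Osc M g G = (INF c::real. Av M G (\<lambda>x. \<bar>g x - c\<bar>))"

definition lip :: "('a::metric_space \<Rightarrow> real) \<Rightarrow> 'a \<Rightarrow> real" where
  "lip f x = real_of_ereal (Liminf (at_right (0::real))
       (\<lambda>r. SUP y\<in>cball x r. ereal (\<bar>f y - f x\<bar> / r)))"

definition weak_local_poincare :: "'a::metric_space measure \<Rightarrow> real \<Rightarrow> bool" where
  "weak_local_poincare \<mu> p \<longleftrightarrow> (\<forall>R>0. \<exists>C lam. C \<ge> 1 \<and> lam \<ge> 1 \<and>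
      (\<forall>f x r. (\<exists>L. L-lipschitz_on UNIV f) \<and> 0 < r \<and> r \<le> R \<longrightarrow>
         Osc \<mu> f (cball x r) \<le> C * r * (Av \<mu> (cball x (lam*r)) (\<lambda>y. (lip f y) powr p)) powr (1/p)))"

definition Q_lower :: "'a::metric_space measure \<Rightarrow> real" where
  "Q_lower \<mu> = Inf {Q. Q > 0 \<and> (\<forall>R>0. \<exists>C. \<forall>x' r' x r.
       cball x' r' \<subseteq> cball x r \<and> 0 < r' \<and> r' \<le> r \<and> r \<le> R \<longrightarrow>
       (r'/r) powr Q \<le> C * measure \<mu> (cball x' r') / measure \<mu> (cball x r))}"

text \<open>Covers are countable families of balls, given as countable sets of (centre, radius) pairs
  (multiplicities only increase the sum, so this does not change the infimum).\<close>
definition H_delta :: "'a::metric_space measure \<Rightarrow> real \<Rightarrow> real \<Rightarrow> 'a set \<Rightarrow> ennreal" where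
  "H_delta \<mu> vt \<delta> E = (INF F\<in>{F. countable F \<and> E \<subseteq> (\<Union>(x,r)\<in>F. cball x r) \<and>
        (\<forall>(x,r)\<in>F. 0 < r \<and> r < \<delta>)}.
      \<integral>\<^sup>+ xr. ennreal (measure \<mu> (cball (fst xr) (snd xr)) * (snd xr) powr (-vt)) \<partial>count_space F)"

definition H_cod :: "'a::metric_space measure \<Rightarrow> real \<Rightarrow> 'a set \<Rightarrow> ennreal" where
  "H_cod \<mu> vt E = (SUP \<delta>\<in>{0<..}. H_delta \<mu> vt \<delta> E)"

text \<open>H_theta as a measure on the Borel sets (it is a metric outer measure).\<close>
definition H_meas :: "'a::metric_space measure \<Rightarrow> real \<Rightarrow> 'a measure" where
  "H_meas \<mu> vt = measure_of UNIV (sets borel) (H_cod \<mu> vt)"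

definition ADR :: "'a::metric_space measure \<Rightarrow> real \<Rightarrow> 'a set \<Rightarrow> bool" where
  "ADR \<mu> vt S \<longleftrightarrow> closed S \<and> (\<exists>\<kappa>1 \<kappa>2. 0 < \<kappa>1 \<and> 0 < \<kappa>2 \<and>
      (\<forall>x\<in>S. \<forall>r. 0 < r \<and> r \<le> 1 \<longrightarrow>
         ennreal (\<kappa>1 * measure \<mu> (cball x r) * r powr (-vt)) \<le> H_cod \<mu> vt (cball x r \<inter> S) \<and>
         H_cod \<mu> vt (cball x r \<inter> S) \<le> ennreal (\<kappa>2 * measure \<mu> (cball x r) * r powr (-vt))))"

definition m_k :: "'a::metric_space measure \<Rightarrow> nat \<Rightarrow> real \<Rightarrow> (nat \<Rightarrow> real) \<Rightarrow> (nat \<Rightarrow> 'a set)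
     \<Rightarrow> nat \<Rightarrow> 'a measure" where
  "m_k \<mu> N \<theta> th S k = measure_of UNIV (sets borel)
     (\<lambda>A. \<Sum>i\<in>{1..N}. ennreal (2 powr (real k * (\<theta> - th i))) * emeasure (H_meas \<mu> (th i)) (A \<inter> S i))"

definition loc_integrable :: "'a::metric_space measure \<Rightarrow> ('a \<Rightarrow> real) \<Rightarrow> bool" where
  "loc_integrable M f \<longleftrightarrow> (\<forall>x r. set_integrable M (cball x r) f)"

definition A_ijk :: "'a::metric_space measure \<Rightarrow> (nat \<Rightarrow> real) \<Rightarrow> (nat \<Rightarrow> 'a set) \<Rightarrow> nat \<Rightarrow> nat
     \<Rightarrow> nat \<Rightarrow> ('a \<Rightarrow> real) \<Rightarrow> 'a \<Rightarrow> 'a \<Rightarrow> real" where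
  "A_ijk \<mu> th S i j k f y z =
     Av (H_meas \<mu> (th i)) (cball y (2 powr (- real k)) \<inter> S i)
       (\<lambda>y'. Av (H_meas \<mu> (th j)) (cball z (2 powr (- real k)) \<inter> S j) (\<lambda>z'. \<bar>f y' - f z'\<bar>))"

end

theory Submission
  imports Defs
begin

(* With B = c B_k(x), each mean of |f - a| over B_k(y) /\ S^i is at most a constant times
   its m_k-mean over B.  Indeed 2^(k(theta - theta_i)) H_theta_i restricted to S^i is dominated
   by m_k; the lower ADR bound gives
   2^(k(theta - theta_i)) H_theta_i(B_k(y) /\ S^i) >= kappa_1 2^(k theta) mu(B_k(y));
   and B /\ S^l is covered by boundedly many balls of radius 2^-k (doubling), so the upper ADR
   bounds give m_k(B) <= C 2^(k theta) mu(B_k(y)).  The triangle inequality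
   |f y' - f z'| <= |f y' - a| + |f z' - a| and the infimum over a conclude.  Only local
   finiteness, doubling and the ADR bounds enter. *)

lemma sigma_sets_borel: "sigma_sets UNIV (sets borel) = sets borel"
  by (metis sets.sigma_sets_eq space_borel)

lemma sets_H_meas [simp, measurable_cong]: "sets (H_meas \<mu> vt) = sets borel"
  unfolding H_meas_def by (simp add: sets_measure_of_conv sigma_sets_borel)

(* H_meas is a measure_of, which is the zero measure unless H_cod is countably additive on
   the Borel sets; the next two facts hold in either case and are all that is used of it. *)

lemma emeasure_H_meas_le_H_cod: "emeasure (H_meas \<mu> vt) A \<le> H_cod \<mu> vt A"
  unfolding H_meas_def by (simp add: emeasure_measure_of_conv)

lemma emeasure_H_meas_eq_H_cod:
  "0 < emeasure (H_meas \<mu> vt) A \<Longrightarrow> emeasure (H_meas \<mu> vt) A = H_cod \<mu> vt A"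
  unfolding H_meas_def by (simp add: emeasure_measure_of_conv split: if_splits)

lemma sets_m_k [simp, measurable_cong]: "sets (m_k \<mu> N \<theta> th S k) = sets borel"
  unfolding m_k_def by (simp add: sets_measure_of_conv sigma_sets_borel)

lemma emeasure_m_k:
  assumes S: "\<And>l. l \<in> {1..N} \<Longrightarrow> S l \<in> sets borel" and A: "A \<in> sets borel"
  shows "emeasure (m_k \<mu> N \<theta> th S k) A =
    (\<Sum>l\<in>{1..N}. ennreal (2 powr (real k * (\<theta> - th l))) * emeasure (H_meas \<mu> (th l)) (A \<inter> S l))"
    (is "_ = ?m A")
proof -
  have "countably_additive (sets borel) ?m"
    unfolding countably_additive_def
  proof (intro allI impI)
    fix F :: "nat \<Rightarrow> 'a set"
    assume F: "range F \<subseteq> sets borel" "disjoint_family F"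
    have "(\<Sum>n. ?m (F n)) = (\<Sum>l\<in>{1..N}. \<Sum>n.
        ennreal (2 powr (real k * (\<theta> - th l))) * emeasure (H_meas \<mu> (th l)) (F n \<inter> S l))"
      by (rule suminf_sum) simp
    also have "\<dots> = ?m (\<Union> (range F))"
    proof (rule sum.cong[OF refl])
      fix l assume l: "l \<in> {1..N}"
      have "(\<Sum>n. emeasure (H_meas \<mu> (th l)) (F n \<inter> S l)) =
          emeasure (H_meas \<mu> (th l)) (\<Union>n. F n \<inter> S l)"
        by (rule suminf_emeasure) (use F S[OF l] in \<open>auto simp: disjoint_family_on_def\<close>)
      then show "(\<Sum>n. ennreal (2 powr (real k * (\<theta> - th l))) * emeasure (H_meas \<mu> (th l)) (F n \<inter> S l)) =
          ennreal (2 powr (real k * (\<theta> - th l))) * emeasure (H_meas \<mu> (th l)) (\<Union> (range F) \<inter> S l)"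
        by (simp add: ennreal_suminf_cmult)
    qed
    finally show "(\<Sum>n. ?m (F n)) = ?m (\<Union> (range F))" .
  qed
  moreover have "positive (sets borel) ?m"
    by (simp add: positive_def)
  moreover have "sigma_algebra UNIV (sets borel)"
    by (metis sets.sigma_algebra_axioms space_borel)
  ultimately show ?thesis
    unfolding m_k_def using emeasure_measure_of_sigma A by blast
qed

lemma nn_integral_le_dominating_measure:
  assumes sets: "sets N = sets M"
    and dom: "\<And>A. A \<in> sets M \<Longrightarrow> emeasure N A \<le> ennreal c * emeasure M A"
    and f: "f \<in> borel_measurable M"
  shows "(\<integral>\<^sup>+x. f x \<partial>N) \<le> ennreal c * (\<integral>\<^sup>+x. f x \<partial>M)"
proof -
  have "emeasure N A \<le> emeasure (scale_measure (ennreal c) M) A" for A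
    using dom[of A] sets by (cases "A \<in> sets M") (simp_all add: emeasure_notin_sets)
  moreover have "space N = space M"
    using sets by (rule sets_eq_imp_space_eq)
  ultimately have "N \<le> scale_measure (ennreal c) M"
    using sets by (simp add: le_measure_iff le_fun_def space_scale_measure)
  then have "(\<integral>\<^sup>+x. f x \<partial>N) \<le> (\<integral>\<^sup>+x. f x \<partial>scale_measure (ennreal c) M)"
    using sets by (intro nn_integral_mono_measure) simp_all
  also have "\<dots> = ennreal c * (\<integral>\<^sup>+x. f x \<partial>M)"
    using f by (rule nn_integral_scale_measure)
  finally show ?thesis .
qed

lemma integrable_dominating_measure:
  fixes f :: "'a \<Rightarrow> real"
  assumes sets: "sets N = sets M"
    and dom: "\<And>A. A \<in> sets M \<Longrightarrow> emeasure N A \<le> ennreal c * emeasure M A"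
    and f: "integrable M f"
  shows "integrable N f"
proof -
  have meas: "f \<in> borel_measurable M" and fin: "(\<integral>\<^sup>+x. ennreal (norm (f x)) \<partial>M) < \<infinity>"
    using f by (simp_all add: integrable_iff_bounded)
  have "(\<integral>\<^sup>+x. ennreal (norm (f x)) \<partial>N) \<le> ennreal c * (\<integral>\<^sup>+x. ennreal (norm (f x)) \<partial>M)"
    using meas by (intro nn_integral_le_dominating_measure[OF sets dom]) simp_all
  also have "\<dots> < \<infinity>"
    using fin by (simp add: ennreal_mult_less_top)
  finally show ?thesis
    using meas sets by (simp add: integrable_iff_bounded cong: measurable_cong_sets)
qed

lemma borel_measurable_loc_integrable:
  fixes f :: "'a::metric_space \<Rightarrow> real"
  assumes sets: "sets M = sets borel" and f: "loc_integrable M f"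
  shows "f \<in> borel_measurable borel"
proof (rule borel_measurable_LIMSEQ_real)
  fix n :: nat
  have "(\<lambda>x. indicator (cball undefined (real n)) x *\<^sub>R f x) \<in> borel_measurable M"
    using f unfolding loc_integrable_def set_integrable_def by blast
  then show "(\<lambda>x. indicator (cball undefined (real n)) x *\<^sub>R f x) \<in> borel_measurable borel"
    using sets by (simp cong: measurable_cong_sets)
next
  fix x :: 'a
  obtain n0 :: nat where "dist undefined x \<le> real n0"
    using real_arch_simple by blast
  then have "\<forall>\<^sub>F n in sequentially. indicator (cball undefined (real n)) x *\<^sub>R f x = f x"
    by (intro eventually_sequentiallyI[of n0]) (auto simp: indicator_def)
  then show "(\<lambda>n. indicator (cball undefined (real n)) x *\<^sub>R f x) \<longlonglongrightarrow> f x"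
    by (rule tendsto_eventually)
qed

lemma integrable_indicator_abs_diff:
  fixes f :: "'a \<Rightarrow> real"
  assumes "set_integrable M G f" "G \<in> sets M" "emeasure M G < \<infinity>"
  shows "integrable M (\<lambda>x. indicator G x * \<bar>f x - c\<bar>)"
proof -
  have "integrable M (\<lambda>x. \<bar>indicator G x * f x - c * indicator G x\<bar>)"
    using assms unfolding set_integrable_def
    by (intro integrable_abs integrable_diff integrable_mult_right) auto
  moreover have "(\<lambda>x. \<bar>indicator G x * f x - c * indicator G x\<bar>) = (\<lambda>x. indicator G x * \<bar>f x - c\<bar>)"
    by (auto simp: indicator_def)
  ultimately show ?thesis
    by simp
qed

lemma Av_nonneg: "(\<And>x. x \<in> G \<Longrightarrow> 0 \<le> h x) \<Longrightarrow> 0 \<le> Av M G h"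
  unfolding Av_def by (auto intro!: integral_nonneg_AE AE_I2 simp: indicator_def)

lemma Av_le_Av_add_const:
  fixes h h' :: "'a \<Rightarrow> real"
  assumes G: "G \<in> sets M" and a: "0 \<le> a"
    and le: "\<And>x. x \<in> G \<Longrightarrow> h x \<le> h' x + a"
    and h': "\<And>x. x \<in> G \<Longrightarrow> 0 \<le> h' x"
    and int: "emeasure M G < \<infinity> \<Longrightarrow> integrable M (\<lambda>x. indicator G x * h' x)"
  shows "Av M G h \<le> Av M G h' + a"
proof (cases "0 < emeasure M G \<and> emeasure M G < \<infinity>")
  case False
  then have "Av M G h = 0"
    by (auto simp: Av_def measure_def less_top[symmetric])
  then show ?thesis
    using Av_nonneg[of G h' M] h' a by simp
next
  case True
  then have mG: "0 < measure M G"
    by (simp add: measure_def enn2real_positive_iff)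
  have int_a: "integrable M (\<lambda>x. a * indicator G x)"
    using G True by simp
  have "(\<integral>x. indicator G x * h x \<partial>M) \<le> (\<integral>x. indicator G x * h' x + a * indicator G x \<partial>M)"
    using le h' a int True int_a by (intro integral_mono') (auto simp: indicator_def)
  also have "\<dots> = (\<integral>x. indicator G x * h' x \<partial>M) + a * measure M G"
    using int True int_a G by (simp add: Bochner_Integration.integral_add)
  finally have "(\<integral>x. indicator G x * h x \<partial>M) / measure M G \<le>
      ((\<integral>x. indicator G x * h' x \<partial>M) + a * measure M G) / measure M G"
    using mG by (rule divide_right_mono[OF _ less_imp_le])
  then show ?thesis
    using True mG by (simp add: Av_def add_divide_distrib)
qed

lemma Av_Av_abs_diff_le:
  fixes f :: "'a \<Rightarrow> real"
  assumes Gi: "Gi \<in> sets Hi" and Gj: "Gj \<in> sets Hj"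
    and int_i: "emeasure Hi Gi < \<infinity> \<Longrightarrow> integrable Hi (\<lambda>x. indicator Gi x * \<bar>f x - c\<bar>)"
    and int_j: "emeasure Hj Gj < \<infinity> \<Longrightarrow> integrable Hj (\<lambda>x. indicator Gj x * \<bar>f x - c\<bar>)"
  shows "Av Hi Gi (\<lambda>y. Av Hj Gj (\<lambda>z. \<bar>f y - f z\<bar>))
    \<le> Av Hi Gi (\<lambda>x. \<bar>f x - c\<bar>) + Av Hj Gj (\<lambda>x. \<bar>f x - c\<bar>)"
proof (rule Av_le_Av_add_const[OF Gi])
  fix y
  have "Av Hj Gj (\<lambda>z. \<bar>f y - f z\<bar>) \<le> Av Hj Gj (\<lambda>x. \<bar>f x - c\<bar>) + \<bar>f y - c\<bar>"
    by (rule Av_le_Av_add_const[OF Gj]) (auto intro: int_j split: abs_split)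
  then show "Av Hj Gj (\<lambda>z. \<bar>f y - f z\<bar>) \<le> \<bar>f y - c\<bar> + Av Hj Gj (\<lambda>x. \<bar>f x - c\<bar>)"
    by simp
qed (auto intro: Av_nonneg int_i)

lemma Av_le_set_integral_div:
  fixes g :: "'a \<Rightarrow> real"
  assumes g: "\<And>x. 0 \<le> g x" and a: "0 < a" "ennreal a \<le> emeasure H G"
  shows "Av H G g \<le> (\<integral>x. indicator G x * g x \<partial>H) / a"
proof -
  have I: "0 \<le> (\<integral>x. indicator G x * g x \<partial>H)"
    using g by (intro integral_nonneg_AE AE_I2 mult_nonneg_nonneg) simp_all
  show ?thesis
  proof (cases "emeasure H G = \<infinity>")
    case True
    then show ?thesis
      using I a by (simp add: Av_def measure_def)
  next
    case False
    then have "emeasure H G = ennreal (measure H G)"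
      by (simp add: emeasure_eq_ennreal_measure)
    then have "a \<le> measure H G"
      using a by (simp add: ennreal_le_iff)
    then show ?thesis
      using a I by (simp add: Av_def divide_left_mono)
  qed
qed

lemma set_integral_le_mult_Av:
  fixes g :: "'a \<Rightarrow> real"
  assumes B: "B \<in> sets M" and g: "\<And>x. 0 \<le> g x" and b: "0 \<le> b" "emeasure M B \<le> ennreal b"
  shows "(\<integral>x. indicator B x * g x \<partial>M) \<le> b * Av M B g"
proof (cases "emeasure M B = 0")
  case True
  then have "AE x in M. indicator B x * g x = 0"
    using B by (auto intro: AE_mp[OF AE_not_in] simp: null_setsI)
  then show ?thesis
    using b g by (simp add: integral_eq_zero_AE Av_nonneg)
next
  case False
  have "emeasure M B = ennreal (measure M B)"
    using b(2) by (metis emeasure_eq_ennreal_measure ennreal_neq_top top_unique)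
  then have mB: "0 < measure M B" "measure M B \<le> b"
    using False b by (auto simp: ennreal_le_iff zero_less_measure_iff)
  then have "(\<integral>x. indicator B x * g x \<partial>M) = measure M B * Av M B g"
    using False by (simp add: Av_def)
  also have "\<dots> \<le> b * Av M B g"
    using mB g by (intro mult_right_mono Av_nonneg) auto
  finally show ?thesis .
qed

lemma set_integral_le_of_nn_integral_le:
  fixes g :: "'a \<Rightarrow> real"
  assumes G: "G \<in> sets H" and g: "g \<in> borel_measurable H" "\<And>x. 0 \<le> g x" and w: "0 < w"
    and int: "integrable M (\<lambda>x. indicator B x * g x)"
    and le: "ennreal w * (\<integral>\<^sup>+x. ennreal (indicator G x * g x) \<partial>H)
      \<le> (\<integral>\<^sup>+x. ennreal (indicator B x * g x) \<partial>M)"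
  shows "w * (\<integral>x. indicator G x * g x \<partial>H) \<le> (\<integral>x. indicator B x * g x \<partial>M)"
proof -
  let ?IG = "\<integral>\<^sup>+x. ennreal (indicator G x * g x) \<partial>H"
  have "(\<lambda>x. indicator G x * g x) \<in> borel_measurable H"
    using G g(1) by (intro borel_measurable_times borel_measurable_indicator)
  then have IG: "(\<integral>x. indicator G x * g x \<partial>H) = enn2real ?IG"
    using g(2) by (intro integral_eq_nn_integral AE_I2 mult_nonneg_nonneg) simp_all
  have IB: "(\<integral>\<^sup>+x. ennreal (indicator B x * g x) \<partial>M) = ennreal (\<integral>x. indicator B x * g x \<partial>M)"
    using g(2) by (intro nn_integral_eq_integral int AE_I2 mult_nonneg_nonneg) simp_all
  have "?IG < \<infinity>"
    using le w unfolding IB by (cases "?IG = \<infinity>") (auto simp: ennreal_mult_top top_unique less_top)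
  then have "ennreal (w * (\<integral>x. indicator G x * g x \<partial>H)) \<le> ennreal (\<integral>x. indicator B x * g x \<partial>M)"
    using le w unfolding IG IB by (simp add: ennreal_mult less_top)
  moreover have "0 \<le> (\<integral>x. indicator B x * g x \<partial>M)"
    using g(2) by (intro integral_nonneg_AE AE_I2 mult_nonneg_nonneg) simp_all
  ultimately show ?thesis
    by simp
qed

lemma Av_le_Av_of_nn_integral_le:
  fixes g :: "'a \<Rightarrow> real"
  assumes G: "G \<in> sets H" and B: "B \<in> sets M"
    and g: "g \<in> borel_measurable H" "\<And>x. 0 \<le> g x"
    and w: "0 < w" and a: "0 < a" "ennreal a \<le> emeasure H G"
    and b: "0 \<le> b" "emeasure M B \<le> ennreal b"
    and int: "integrable M (\<lambda>x. indicator B x * g x)"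
    and le: "ennreal w * (\<integral>\<^sup>+x. ennreal (indicator G x * g x) \<partial>H)
      \<le> (\<integral>\<^sup>+x. ennreal (indicator B x * g x) \<partial>M)"
  shows "Av H G g \<le> b / (w * a) * Av M B g"
proof -
  have "Av H G g \<le> (\<integral>x. indicator G x * g x \<partial>H) / a"
    using g(2) a by (rule Av_le_set_integral_div)
  also have "\<dots> = w * (\<integral>x. indicator G x * g x \<partial>H) / (w * a)"
    using w by simp
  also have "\<dots> \<le> (\<integral>x. indicator B x * g x \<partial>M) / (w * a)"
    using w a by (intro divide_right_mono set_integral_le_of_nn_integral_le[OF G g w int le]) simp
  also have "\<dots> \<le> b * Av M B g / (w * a)"
    using w a by (intro divide_right_mono set_integral_le_mult_Av[OF B g(2) b]) simp
  finally show ?thesis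
    by simp
qed

lemma cball_subset_cball_dist:
  assumes "dist x y + r \<le> s"
  shows "cball y r \<subseteq> cball x s"
proof
  fix z assume "z \<in> cball y r"
  then show "z \<in> cball x s"
    using dist_triangle[of x z y] assms by simp
qed

definition separated :: "real \<Rightarrow> 'a::metric_space set \<Rightarrow> bool" where
  "separated s W \<longleftrightarrow> (\<forall>w\<in>W. \<forall>w'\<in>W. w \<noteq> w' \<longrightarrow> s < dist w w')"

lemma separated_disjoint_cballs:
  assumes "separated s W"
  shows "disjoint_family_on (\<lambda>w. cball w (s/2)) W"
  unfolding disjoint_family_on_def
proof (intro ballI impI)
  fix v w assume "v \<in> W" "w \<in> W" "v \<noteq> w"
  then have "s < dist v w"
    using assms unfolding separated_def by blast
  show "cball v (s/2) \<inter> cball w (s/2) = {}"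
  proof (rule equals0I)
    fix z assume "z \<in> cball v (s/2) \<inter> cball w (s/2)"
    then show False
      using dist_triangle2[of v w z] \<open>s < dist v w\<close> by simp
  qed
qed

lemma cover_by_maximal_separated_set:
  assumes s: "0 \<le> s"
    and bound: "\<And>W. finite W \<Longrightarrow> W \<subseteq> E \<Longrightarrow> separated s W \<Longrightarrow> card W \<le> n"
  obtains W where "finite W" "W \<subseteq> E" "card W \<le> n" "E \<subseteq> (\<Union>w\<in>W. cball w s)"
proof -
  let ?P = "\<lambda>W. finite W \<and> W \<subseteq> E \<and> separated s W"
  have "\<exists>W. ?P W \<and> (\<forall>V. ?P V \<longrightarrow> card V \<le> card W)"
  proof (rule Lattices_Big.ex_has_greatest_nat[where k = "{}" and b = "Suc n"])
    show "?P {}"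
      by (simp add: separated_def)
    show "\<forall>V. ?P V \<longrightarrow> card V < Suc n"
      using bound by (simp add: le_imp_less_Suc)
  qed
  then obtain W where W: "?P W" "\<And>V. ?P V \<Longrightarrow> card V \<le> card W"
    by blast
  have "E \<subseteq> (\<Union>w\<in>W. cball w s)"
  proof
    fix e assume e: "e \<in> E"
    show "e \<in> (\<Union>w\<in>W. cball w s)"
    proof (rule ccontr)
      assume "e \<notin> (\<Union>w\<in>W. cball w s)"
      then have far: "\<forall>w\<in>W. s < dist w e"
        by (auto simp: not_le)
      then have "e \<notin> W"
        using s by force
      moreover have "?P (insert e W)"
        using W(1) e far by (auto simp: separated_def dist_commute)
      then have "card (insert e W) \<le> card W"
        by (rule W(2))
      ultimately show False
        using W(1) by simp
    qed
  qed
  then show ?thesis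
    using W(1) bound that by blast
qed

locale doubling_metric_measure =
  fixes \<mu> :: "'a::metric_space measure"
  assumes loc_finite_full_support: "loc_finite_full_support \<mu>"
    and unif_loc_doubling: "unif_loc_doubling \<mu>"
begin

lemma sets_eq [simp, measurable_cong]: "sets \<mu> = sets borel"
  using loc_finite_full_support unfolding loc_finite_full_support_def by simp

lemma emeasure_cball_pow2_le:
  assumes R: "0 < R"
  obtains D where "1 \<le> D"
    "\<And>x \<rho> m. 0 < \<rho> \<Longrightarrow> 2 ^ m * \<rho> \<le> R \<Longrightarrow>
      emeasure \<mu> (cball x (2 ^ m * \<rho>)) \<le> ennreal (D ^ m) * emeasure \<mu> (cball x \<rho>)"
proof -
  obtain D0 where D0: "\<And>r x. 0 < r \<Longrightarrow> r \<le> R \<Longrightarrow>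
      emeasure \<mu> (cball x (2 * r)) \<le> ennreal D0 * emeasure \<mu> (cball x r)"
    using unif_loc_doubling R unfolding unif_loc_doubling_def by blast
  define D where "D = max D0 1"
  have D: "emeasure \<mu> (cball x (2 * r)) \<le> ennreal D * emeasure \<mu> (cball x r)"
    if "0 < r" "r \<le> R" for r x
  proof -
    have "ennreal D0 * emeasure \<mu> (cball x r) \<le> ennreal D * emeasure \<mu> (cball x r)"
      unfolding D_def by (intro mult_right_mono ennreal_leI) simp_all
    with D0[OF that, of x] show ?thesis
      by (rule order_trans)
  qed
  have "emeasure \<mu> (cball x (2 ^ m * \<rho>)) \<le> ennreal (D ^ m) * emeasure \<mu> (cball x \<rho>)"
    if "0 < \<rho>" "2 ^ m * \<rho> \<le> R" for m x \<rho>
    using that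
  proof (induction m)
    case 0
    then show ?case
      by simp
  next
    case (Suc m)
    have "0 < 2 ^ m * \<rho>"
      using Suc.prems(1) by simp
    then have le: "2 ^ m * \<rho> \<le> R"
      using Suc.prems(2) by (simp only: power_Suc mult.assoc)
    have "emeasure \<mu> (cball x (2 ^ Suc m * \<rho>)) = emeasure \<mu> (cball x (2 * (2 ^ m * \<rho>)))"
      by (simp add: mult.assoc)
    also have "\<dots> \<le> ennreal D * emeasure \<mu> (cball x (2 ^ m * \<rho>))"
      using Suc.prems le by (intro D) simp_all
    also have "\<dots> \<le> ennreal D * (ennreal (D ^ m) * emeasure \<mu> (cball x \<rho>))"
      using Suc.IH[OF Suc.prems(1) le] by (rule mult_left_mono) simp
    also have "\<dots> = ennreal (D ^ Suc m) * emeasure \<mu> (cball x \<rho>)"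
      unfolding D_def by (simp add: ennreal_mult mult.assoc)
    finally show ?case .
  qed
  moreover have "1 \<le> D"
    unfolding D_def by simp
  ultimately show ?thesis
    using that by blast
qed

lemma emeasure_cball_dilate:
  assumes L: "1 \<le> L" and R: "0 < R"
  obtains \<Lambda> where "1 \<le> \<Lambda>"
    "\<And>x \<rho>. 0 < \<rho> \<Longrightarrow> \<rho> \<le> R \<Longrightarrow> emeasure \<mu> (cball x (L * \<rho>)) \<le> ennreal \<Lambda> * emeasure \<mu> (cball x \<rho>)"
proof -
  obtain n :: nat where n: "L \<le> 2 ^ n"
    using real_arch_pow[of 2 L] by (auto intro: less_imp_le)
  have "0 < 2 ^ n * R"
    using R by simp
  then obtain D where D: "1 \<le> D"
    "\<And>x \<rho> m. 0 < \<rho> \<Longrightarrow> 2 ^ m * \<rho> \<le> 2 ^ n * R \<Longrightarrow>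
      emeasure \<mu> (cball x (2 ^ m * \<rho>)) \<le> ennreal (D ^ m) * emeasure \<mu> (cball x \<rho>)"
    using emeasure_cball_pow2_le by blast
  show ?thesis
  proof
    show "1 \<le> D ^ n"
      using D(1) by simp
    fix x \<rho> assume \<rho>: "0 < \<rho>" "\<rho> \<le> R"
    have "emeasure \<mu> (cball x (L * \<rho>)) \<le> emeasure \<mu> (cball x (2 ^ n * \<rho>))"
      using n \<rho> by (intro emeasure_mono subset_cball mult_right_mono) simp_all
    also have "\<dots> \<le> ennreal (D ^ n) * emeasure \<mu> (cball x \<rho>)"
      using \<rho> by (intro D(2)) (simp_all add: mult_left_mono)
    finally show "emeasure \<mu> (cball x (L * \<rho>)) \<le> ennreal (D ^ n) * emeasure \<mu> (cball x \<rho>)" .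
  qed
qed

lemma emeasure_cball_finite: "emeasure \<mu> (cball x \<rho>) < \<infinity>"
proof -
  obtain r0 where r0: "0 < r0" "emeasure \<mu> (cball x r0) < \<infinity>"
    using loc_finite_full_support unfolding loc_finite_full_support_def by blast
  define L where "L = max 1 (\<rho> / r0)"
  have "1 \<le> L"
    unfolding L_def by simp
  then obtain \<Lambda> where \<Lambda>: "\<And>x \<rho>'. 0 < \<rho>' \<Longrightarrow> \<rho>' \<le> r0 \<Longrightarrow>
      emeasure \<mu> (cball x (L * \<rho>')) \<le> ennreal \<Lambda> * emeasure \<mu> (cball x \<rho>')"
    using emeasure_cball_dilate r0(1) by blast
  have "ennreal \<Lambda> * emeasure \<mu> (cball x r0) < \<infinity>"
    using r0(2) by (simp add: ennreal_mult_less_top)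
  then have "emeasure \<mu> (cball x (L * r0)) < \<infinity>"
    by (rule order.strict_trans1[OF \<Lambda>[OF r0(1) order_refl]])
  moreover have "\<rho> \<le> L * r0"
    using r0 unfolding L_def by (simp add: field_simps max_def)
  then have "emeasure \<mu> (cball x \<rho>) \<le> emeasure \<mu> (cball x (L * r0))"
    by (intro emeasure_mono subset_cball) simp_all
  ultimately show ?thesis
    by (rule order.strict_trans1[rotated])
qed

lemma emeasure_cball_eq_measure: "emeasure \<mu> (cball x \<rho>) = ennreal (measure \<mu> (cball x \<rho>))"
  using emeasure_cball_finite by (simp add: emeasure_eq_ennreal_measure less_top)

lemma measure_cball_pos: "0 < \<rho> \<Longrightarrow> 0 < measure \<mu> (cball x \<rho>)"
  using loc_finite_full_support unfolding loc_finite_full_support_def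
  by (metis emeasure_cball_eq_measure ennreal_less_zero_iff)

lemma measure_mono_cball: "A \<in> sets borel \<Longrightarrow> A \<subseteq> cball x \<rho> \<Longrightarrow> measure \<mu> A \<le> measure \<mu> (cball x \<rho>)"
  using emeasure_cball_finite[of x \<rho>] by (intro measure_mono_fmeasurable) (auto simp: fmeasurable_def)

lemma measure_cball_dilate:
  assumes "1 \<le> L"
  obtains \<Lambda> where "0 < \<Lambda>"
    "\<And>x \<rho>. 0 < \<rho> \<Longrightarrow> \<rho> \<le> 1 \<Longrightarrow> measure \<mu> (cball x (L * \<rho>)) \<le> \<Lambda> * measure \<mu> (cball x \<rho>)"
proof -
  obtain \<Lambda> where "1 \<le> \<Lambda>"
    "\<And>x \<rho>. 0 < \<rho> \<Longrightarrow> \<rho> \<le> 1 \<Longrightarrow> emeasure \<mu> (cball x (L * \<rho>)) \<le> ennreal \<Lambda> * emeasure \<mu> (cball x \<rho>)"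
    using emeasure_cball_dilate[OF assms, of 1] by auto
  then show ?thesis
    using that[of \<Lambda>] by (simp add: emeasure_cball_eq_measure ennreal_mult[symmetric])
qed

lemma card_separated_le:
  assumes s: "0 < s" and W: "finite W" "W \<subseteq> cball x R" "separated s W" and \<Lambda>: "0 \<le> \<Lambda>"
    and dilate: "\<And>w. w \<in> W \<Longrightarrow> measure \<mu> (cball x (R + s/2)) \<le> \<Lambda> * measure \<mu> (cball w (s/2))"
  shows "real (card W) \<le> \<Lambda>"
proof (cases "W = {}")
  case True
  then show ?thesis
    using \<Lambda> by simp
next
  case False
  then obtain w where "w \<in> W"
    by blast
  then have "dist x w \<le> R"
    using W(2) by auto
  then have "0 \<le> R"
    using zero_le_dist[of x w] by linarith
  then have V: "0 < measure \<mu> (cball x (R + s/2))"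
    using s by (intro measure_cball_pos) simp
  have "(\<Sum>w\<in>W. measure \<mu> (cball w (s/2))) = measure \<mu> (\<Union>w\<in>W. cball w (s/2))"
    using W(1) separated_disjoint_cballs[OF W(3)] emeasure_cball_finite
    by (intro measure_finite_Union[symmetric]) (auto simp: less_top)
  also have "\<dots> \<le> measure \<mu> (cball x (R + s/2))"
  proof (rule measure_mono_cball)
    show "(\<Union>w\<in>W. cball w (s/2)) \<subseteq> cball x (R + s/2)"
      using W(2) by (intro UN_least cball_subset_cball_dist) auto
  qed (use W(1) in auto)
  finally have sum: "(\<Sum>w\<in>W. measure \<mu> (cball w (s/2))) \<le> measure \<mu> (cball x (R + s/2))" .
  have "real (card W) * measure \<mu> (cball x (R + s/2)) \<le> (\<Sum>w\<in>W. \<Lambda> * measure \<mu> (cball w (s/2)))"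
    using dilate by (simp add: sum_mono flip: sum_constant)
  also have "\<dots> \<le> \<Lambda> * measure \<mu> (cball x (R + s/2))"
    using sum \<Lambda> by (simp add: mult_left_mono flip: sum_distrib_left)
  finally show ?thesis
    using V by simp
qed

lemma cover_by_small_balls:
  fixes E :: "'a set"
  assumes c: "1 \<le> c" and \<Lambda>: "0 < \<Lambda>"
    and dilate: "\<And>x \<rho>. 0 < \<rho> \<Longrightarrow> \<rho> \<le> 1 \<Longrightarrow> measure \<mu> (cball x (5 * c * \<rho>)) \<le> \<Lambda> * measure \<mu> (cball x \<rho>)"
    and r: "0 < r" "r \<le> 1" and E: "E \<subseteq> cball x (c * r)"
  obtains W where "finite W" "W \<subseteq> E" "real (card W) \<le> \<Lambda>" "E \<subseteq> (\<Union>w\<in>W. cball w r)"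
proof -
  have "real (card W) \<le> \<Lambda>" if W: "finite W" "W \<subseteq> E" "separated r W" for W
  proof (rule card_separated_le[where s = r and x = x and R = "c * r"])
    show "0 < r" "finite W" "separated r W" "0 \<le> \<Lambda>"
      using r W \<Lambda> by simp_all
    show "W \<subseteq> cball x (c * r)"
      using W(2) E by blast
    fix w assume "w \<in> W"
    then have "dist x w \<le> c * r"
      using W(2) E by auto
    then have "cball x (c * r + r/2) \<subseteq> cball w (5 * c * (r/2))"
      using mult_right_mono[OF c, of r] r dist_commute[of x w]
      by (intro cball_subset_cball_dist) linarith
    then have "measure \<mu> (cball x (c * r + r/2)) \<le> measure \<mu> (cball w (5 * c * (r/2)))"
      by (intro measure_mono_cball) simp_all
    also have "\<dots> \<le> \<Lambda> * measure \<mu> (cball w (r/2))"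
      using r by (intro dilate) simp_all
    finally show "measure \<mu> (cball x (c * r + r/2)) \<le> \<Lambda> * measure \<mu> (cball w (r/2))" .
  qed
  then have card_le: "card W \<le> nat \<lfloor>\<Lambda>\<rfloor>" if "finite W" "W \<subseteq> E" "separated r W" for W
    using that by (simp add: le_nat_floor)
  obtain W where W: "finite W" "W \<subseteq> E" "card W \<le> nat \<lfloor>\<Lambda>\<rfloor>" "E \<subseteq> (\<Union>w\<in>W. cball w r)"
    using cover_by_maximal_separated_set[OF less_imp_le[OF r(1)] card_le] by blast
  have "real (card W) \<le> real (nat \<lfloor>\<Lambda>\<rfloor>)"
    using W(3) by simp
  also have "\<dots> \<le> \<Lambda>"
    using \<Lambda> by (intro of_nat_floor) simp
  finally show ?thesis
    using W that by blast
qed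

end

lemma two_powr_neg_le_one: "(2::real) powr (- real k) \<le> 1"
  using powr_mono[of "- real k" 0 "2::real"] by simp

lemma two_powr_weight_mult:
  "2 powr (real k * (\<theta> - t)) * (2 powr (- real k)) powr (- t) = 2 powr (real k * \<theta>)"
proof -
  have "(2 powr (- real k)) powr (- t) = 2 powr (real k * t)"
    by (simp add: powr_powr)
  then show ?thesis
    by (simp add: algebra_simps flip: powr_add)
qed

definition ADR_bounds :: "'a::metric_space measure \<Rightarrow> real \<Rightarrow> real \<Rightarrow> real \<Rightarrow> 'a set \<Rightarrow> bool" where
  "ADR_bounds \<mu> \<kappa>1 \<kappa>2 vt S \<longleftrightarrow> (\<forall>x\<in>S. \<forall>r. 0 < r \<and> r \<le> 1 \<longrightarrow>
     ennreal (\<kappa>1 * measure \<mu> (cball x r) * r powr (- vt)) \<le> H_cod \<mu> vt (cball x r \<inter> S) \<and>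
     H_cod \<mu> vt (cball x r \<inter> S) \<le> ennreal (\<kappa>2 * measure \<mu> (cball x r) * r powr (- vt)))"

lemma ADR_bounds_mono:
  assumes "ADR_bounds \<mu> \<kappa>1 \<kappa>2 vt S" "\<kappa>1' \<le> \<kappa>1" "\<kappa>2 \<le> \<kappa>2'"
  shows "ADR_bounds \<mu> \<kappa>1' \<kappa>2' vt S"
proof -
  have "ennreal (\<kappa>1' * measure \<mu> B * r powr t) \<le> ennreal (\<kappa>1 * measure \<mu> B * r powr t)" for B r t
    using assms(2) by (intro ennreal_leI mult_right_mono) simp_all
  moreover have "ennreal (\<kappa>2 * measure \<mu> B * r powr t) \<le> ennreal (\<kappa>2' * measure \<mu> B * r powr t)" for B r t
    using assms(3) by (intro ennreal_leI mult_right_mono) simp_all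
  ultimately show ?thesis
    using assms(1) unfolding ADR_bounds_def by (blast intro: order_trans)
qed

lemma ADR_uniform_constants:
  assumes "finite I" "\<forall>l\<in>I. ADR \<mu> (th l) (S l)"
  shows "\<exists>\<kappa>1>0. \<exists>\<kappa>2>0. \<forall>l\<in>I. ADR_bounds \<mu> \<kappa>1 \<kappa>2 (th l) (S l)"
  using assms
proof (induction I rule: finite_induct)
  case empty
  show ?case
    using zero_less_one by blast
next
  case (insert l I)
  obtain a1 a2 where a: "0 < a1" "0 < a2" "\<forall>l\<in>I. ADR_bounds \<mu> a1 a2 (th l) (S l)"
    using insert by auto
  obtain b1 b2 where b: "0 < b1" "0 < b2" "ADR_bounds \<mu> b1 b2 (th l) (S l)"
    using insert.prems unfolding ADR_def ADR_bounds_def by auto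
  have "\<forall>l\<in>insert l I. ADR_bounds \<mu> (min a1 b1) (max a2 b2) (th l) (S l)"
    using a(3) b(3) by (auto intro: ADR_bounds_mono)
  moreover have "0 < min a1 b1" "0 < max a2 b2"
    using a b by auto
  ultimately show ?case
    by blast
qed

locale ADR_family = doubling_metric_measure \<mu> for \<mu> :: "'a::metric_space measure" +
  fixes N :: nat and th :: "nat \<Rightarrow> real" and S :: "nat \<Rightarrow> 'a set" and \<kappa>1 \<kappa>2 :: real
  assumes S_closed: "\<And>l. l \<in> {1..N} \<Longrightarrow> closed (S l)"
    and \<kappa>1_pos: "0 < \<kappa>1" and \<kappa>2_pos: "0 < \<kappa>2"
    and ADR_bounds: "\<And>l. l \<in> {1..N} \<Longrightarrow> ADR_bounds \<mu> \<kappa>1 \<kappa>2 (th l) (S l)"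
begin

lemma H_cod_lower:
  "l \<in> {1..N} \<Longrightarrow> x \<in> S l \<Longrightarrow> 0 < r \<Longrightarrow> r \<le> 1 \<Longrightarrow>
    ennreal (\<kappa>1 * measure \<mu> (cball x r) * r powr (- th l)) \<le> H_cod \<mu> (th l) (cball x r \<inter> S l)"
  using ADR_bounds unfolding ADR_bounds_def by blast

lemma H_cod_upper:
  "l \<in> {1..N} \<Longrightarrow> x \<in> S l \<Longrightarrow> 0 < r \<Longrightarrow> r \<le> 1 \<Longrightarrow>
    H_cod \<mu> (th l) (cball x r \<inter> S l) \<le> ennreal (\<kappa>2 * measure \<mu> (cball x r) * r powr (- th l))"
  using ADR_bounds unfolding ADR_bounds_def by blast

lemma S_borel [measurable]: "l \<in> {1..N} \<Longrightarrow> S l \<in> sets borel"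
  using S_closed by simp

lemma emeasure_m_k_eq:
  "A \<in> sets borel \<Longrightarrow> emeasure (m_k \<mu> N \<theta> th S k) A =
    (\<Sum>l\<in>{1..N}. ennreal (2 powr (real k * (\<theta> - th l))) * emeasure (H_meas \<mu> (th l)) (A \<inter> S l))"
  by (rule emeasure_m_k) (rule S_borel)

lemma weighted_H_meas_le_m_k:
  assumes l: "l \<in> {1..N}" and A: "A \<in> sets borel"
  shows "ennreal (2 powr (real k * (\<theta> - th l))) * emeasure (H_meas \<mu> (th l)) (A \<inter> S l)
    \<le> emeasure (m_k \<mu> N \<theta> th S k) A"
  unfolding emeasure_m_k_eq[OF A] by (rule member_le_sum[OF l]) simp_all

lemma nn_integral_H_meas_le_m_k:
  assumes l: "l \<in> {1..N}" and h: "h \<in> borel_measurable borel"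
  shows "ennreal (2 powr (real k * (\<theta> - th l))) * (\<integral>\<^sup>+x. indicator (S l) x * h x \<partial>H_meas \<mu> (th l))
    \<le> (\<integral>\<^sup>+x. h x \<partial>m_k \<mu> N \<theta> th S k)"
proof -
  let ?w = "2 powr (real k * (\<theta> - th l))"
  let ?R = "scale_measure (ennreal ?w) (density (H_meas \<mu> (th l)) (indicator (S l)))"
  have "ennreal ?w * (\<integral>\<^sup>+x. indicator (S l) x * h x \<partial>H_meas \<mu> (th l)) = (\<integral>\<^sup>+x. h x \<partial>?R)"
    using S_borel[OF l] h by (simp add: nn_integral_scale_measure nn_integral_density)
  also have "\<dots> \<le> ennreal 1 * (\<integral>\<^sup>+x. h x \<partial>m_k \<mu> N \<theta> th S k)"
  proof (rule nn_integral_le_dominating_measure)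
    fix A assume "A \<in> sets (m_k \<mu> N \<theta> th S k)"
    then show "emeasure ?R A \<le> ennreal 1 * emeasure (m_k \<mu> N \<theta> th S k) A"
      using weighted_H_meas_le_m_k[OF l, of A k \<theta>] S_borel[OF l]
      by (simp add: emeasure_restricted Int_commute)
  qed (use h in simp_all)
  finally show ?thesis
    by simp
qed

lemma nn_integral_restrict_H_meas_le_m_k:
  assumes i: "i \<in> {1..N}" and G: "G \<subseteq> B" and B: "B \<in> sets borel"
    and g: "g \<in> borel_measurable borel"
  shows "ennreal (2 powr (real k * (\<theta> - th i))) *
      (\<integral>\<^sup>+x. ennreal (indicator (G \<inter> S i) x * g x) \<partial>H_meas \<mu> (th i))
    \<le> (\<integral>\<^sup>+x. ennreal (indicator B x * g x) \<partial>m_k \<mu> N \<theta> th S k)"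
proof -
  have "(\<integral>\<^sup>+x. ennreal (indicator (G \<inter> S i) x * g x) \<partial>H_meas \<mu> (th i))
      \<le> (\<integral>\<^sup>+x. indicator (S i) x * ennreal (indicator B x * g x) \<partial>H_meas \<mu> (th i))"
    using G by (intro nn_integral_mono) (auto simp: indicator_def)
  then show ?thesis
    using B g by (intro order_trans[OF mult_left_mono nn_integral_H_meas_le_m_k[OF i]]) simp_all
qed

lemma emeasure_m_k_le_m_0:
  assumes A: "A \<in> sets borel"
  shows "emeasure (m_k \<mu> N \<theta> th S k) A
    \<le> ennreal (\<Sum>l\<in>{1..N}. 2 powr (real k * (\<theta> - th l))) * emeasure (m_k \<mu> N \<theta> th S 0) A"
proof -
  let ?W = "\<Sum>l\<in>{1..N}. 2 powr (real k * (\<theta> - th l))"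
  have "emeasure (m_k \<mu> N \<theta> th S k) A
      \<le> (\<Sum>l\<in>{1..N}. ennreal ?W * emeasure (H_meas \<mu> (th l)) (A \<inter> S l))"
    unfolding emeasure_m_k_eq[OF A]
    by (intro sum_mono mult_right_mono ennreal_leI member_le_sum) simp_all
  also have "\<dots> = ennreal ?W * emeasure (m_k \<mu> N \<theta> th S 0) A"
    unfolding emeasure_m_k_eq[OF A] by (simp add: sum_distrib_left)
  finally show ?thesis .
qed

lemma loc_integrable_m_k:
  assumes "loc_integrable (m_k \<mu> N \<theta> th S 0) f"
  shows "loc_integrable (m_k \<mu> N \<theta> th S k) f"
  unfolding loc_integrable_def set_integrable_def
proof (intro allI)
  fix x r
  have "integrable (m_k \<mu> N \<theta> th S 0) (\<lambda>y. indicator (cball x r) y *\<^sub>R f y)"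
    using assms unfolding loc_integrable_def set_integrable_def by blast
  then show "integrable (m_k \<mu> N \<theta> th S k) (\<lambda>y. indicator (cball x r) y *\<^sub>R f y)"
  proof (rule integrable_dominating_measure[rotated 2])
    fix A assume "A \<in> sets (m_k \<mu> N \<theta> th S 0)"
    then show "emeasure (m_k \<mu> N \<theta> th S k) A \<le>
        ennreal (\<Sum>l\<in>{1..N}. 2 powr (real k * (\<theta> - th l))) * emeasure (m_k \<mu> N \<theta> th S 0) A"
      by (intro emeasure_m_k_le_m_0) simp
  qed simp
qed

lemma set_integrable_H_meas:
  assumes f: "loc_integrable (m_k \<mu> N \<theta> th S 0) f" and l: "l \<in> {1..N}"
  shows "set_integrable (H_meas \<mu> (th l)) (cball x \<rho> \<inter> S l) f"
proof -
  have f_meas: "f \<in> borel_measurable borel"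
    using f by (intro borel_measurable_loc_integrable) simp_all
  have "integrable (m_k \<mu> N \<theta> th S 0) (\<lambda>y. indicator (cball x \<rho>) y *\<^sub>R f y)"
    using f unfolding loc_integrable_def set_integrable_def by blast
  then have "integrable (density (H_meas \<mu> (th l)) (indicator (S l))) (\<lambda>y. indicator (cball x \<rho>) y *\<^sub>R f y)"
  proof (rule integrable_dominating_measure[rotated 2])
    fix A assume "A \<in> sets (m_k \<mu> N \<theta> th S 0)"
    then show "emeasure (density (H_meas \<mu> (th l)) (indicator (S l))) A
        \<le> ennreal 1 * emeasure (m_k \<mu> N \<theta> th S 0) A"
      using weighted_H_meas_le_m_k[OF l, of A 0 \<theta>] S_borel[OF l]
      by (simp add: emeasure_restricted Int_commute)
  qed simp
  then have "integrable (H_meas \<mu> (th l)) (\<lambda>y. indicator (S l) y *\<^sub>R (indicator (cball x \<rho>) y *\<^sub>R f y))"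
    using f_meas S_borel[OF l] by (subst integrable_density[symmetric]) (simp_all add: ennreal_indicator)
  moreover have "(\<lambda>y. indicator (S l) y *\<^sub>R (indicator (cball x \<rho>) y *\<^sub>R f y)) =
      (\<lambda>y. indicator (cball x \<rho> \<inter> S l) y *\<^sub>R f y)"
    by (auto simp: indicator_def)
  ultimately show ?thesis
    unfolding set_integrable_def by simp
qed

(* 5 c is the largest dilation needed: cball x (c r + r/2) is inside cball w (5 c r/2) for the
   covering, and cball w r is inside cball y (5 c r) when comparing the covering balls. *)

context
  fixes c \<Lambda> :: real
  assumes c: "1 \<le> c" and \<Lambda>: "0 < \<Lambda>"
    and dilate: "\<And>x \<rho>. 0 < \<rho> \<Longrightarrow> \<rho> \<le> 1 \<Longrightarrow> measure \<mu> (cball x (5 * c * \<rho>)) \<le> \<Lambda> * measure \<mu> (cball x \<rho>)"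
begin

lemma H_meas_cball_le:
  assumes l: "l \<in> {1..N}" and r: "0 < r" "r \<le> 1" and y: "y \<in> cball x (c * r)"
  shows "emeasure (H_meas \<mu> (th l)) (cball x (c * r) \<inter> S l)
    \<le> ennreal (\<Lambda>\<^sup>2 * \<kappa>2 * measure \<mu> (cball y r) * r powr (- th l))"
proof -
  let ?H = "H_meas \<mu> (th l)"
  obtain W where W: "finite W" "W \<subseteq> cball x (c * r) \<inter> S l" "real (card W) \<le> \<Lambda>"
      "cball x (c * r) \<inter> S l \<subseteq> (\<Union>w\<in>W. cball w r)"
    by (rule cover_by_small_balls[OF c \<Lambda> dilate r, of "cball x (c * r) \<inter> S l" x]) auto
  define K where "K = \<Lambda> * \<kappa>2 * measure \<mu> (cball y r) * r powr (- th l)"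
  have K: "0 \<le> K"
    unfolding K_def using \<Lambda> \<kappa>2_pos by simp
  have piece: "emeasure ?H (cball w r \<inter> S l) \<le> ennreal K" if w: "w \<in> W" for w
  proof -
    have "dist y w \<le> 2 * c * r"
      using w W(2) y dist_triangle3[of y w x] by auto
    then have "cball w r \<subseteq> cball y (5 * c * r)"
      using mult_right_mono[OF c, of r] r by (intro cball_subset_cball_dist) linarith
    then have "measure \<mu> (cball w r) \<le> measure \<mu> (cball y (5 * c * r))"
      by (intro measure_mono_cball) simp_all
    also have "\<dots> \<le> \<Lambda> * measure \<mu> (cball y r)"
      using r by (rule dilate)
    finally have "\<kappa>2 * measure \<mu> (cball w r) \<le> \<kappa>2 * (\<Lambda> * measure \<mu> (cball y r))"
      using \<kappa>2_pos by simp
    from mult_right_mono[OF this powr_ge_zero[of r "- th l"]]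
    have "\<kappa>2 * measure \<mu> (cball w r) * r powr (- th l) \<le> K"
      unfolding K_def by (simp add: ac_simps)
    moreover have "emeasure ?H (cball w r \<inter> S l)
        \<le> ennreal (\<kappa>2 * measure \<mu> (cball w r) * r powr (- th l))"
      using emeasure_H_meas_le_H_cod H_cod_upper[OF l _ r] w W(2) by (blast intro: order_trans)
    ultimately show ?thesis
      by (meson ennreal_leI order_trans)
  qed
  have "emeasure ?H (cball x (c * r) \<inter> S l) \<le> emeasure ?H (\<Union>w\<in>W. cball w r \<inter> S l)"
  proof (rule emeasure_mono)
    show "(\<Union>w\<in>W. cball w r \<inter> S l) \<in> sets ?H"
      using W(1) S_borel[OF l] by (intro sets.finite_UN) simp_all
  qed (use W(4) in blast)
  also have "\<dots> \<le> (\<Sum>w\<in>W. emeasure ?H (cball w r \<inter> S l))"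
    using W(1) S_borel[OF l] by (intro emeasure_subadditive_finite) auto
  also have "\<dots> \<le> (\<Sum>w\<in>W. ennreal K)"
    using piece by (rule sum_mono)
  also have "\<dots> = ennreal (real (card W) * K)"
    using K by (simp add: ennreal_mult ennreal_of_nat_eq_real_of_nat)
  also have "\<dots> \<le> ennreal (\<Lambda> * K)"
    using W(3) K by (intro ennreal_leI mult_right_mono)
  finally show ?thesis
    by (simp add: K_def power2_eq_square ac_simps)
qed

lemma emeasure_m_k_cball_le:
  assumes y: "y \<in> cball x (c * 2 powr (- real k))"
  shows "emeasure (m_k \<mu> N \<theta> th S k) (cball x (c * 2 powr (- real k)))
    \<le> ennreal (real N * \<Lambda>\<^sup>2 * \<kappa>2 * measure \<mu> (cball y (2 powr (- real k))) * 2 powr (real k * \<theta>))"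
proof -
  let ?r = "2 powr (- real k) :: real"
  define Q where "Q = \<Lambda>\<^sup>2 * \<kappa>2 * measure \<mu> (cball y ?r)"
  have Q: "0 \<le> Q"
    unfolding Q_def using \<kappa>2_pos by simp
  have r: "0 < ?r" "?r \<le> 1"
    using two_powr_neg_le_one by simp_all
  have "emeasure (m_k \<mu> N \<theta> th S k) (cball x (c * ?r))
      = (\<Sum>l\<in>{1..N}. ennreal (2 powr (real k * (\<theta> - th l))) * emeasure (H_meas \<mu> (th l)) (cball x (c * ?r) \<inter> S l))"
    by (simp add: emeasure_m_k_eq)
  also have "\<dots> \<le> (\<Sum>l\<in>{1..N}. ennreal (Q * 2 powr (real k * \<theta>)))"
  proof (rule sum_mono)
    fix l assume l: "l \<in> {1..N}"
    have "ennreal (2 powr (real k * (\<theta> - th l))) * emeasure (H_meas \<mu> (th l)) (cball x (c * ?r) \<inter> S l)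
        \<le> ennreal (2 powr (real k * (\<theta> - th l))) * ennreal (Q * ?r powr (- th l))"
      using H_meas_cball_le[OF l r y] unfolding Q_def by (intro mult_left_mono) simp_all
    also have "\<dots> = ennreal (Q * (2 powr (real k * (\<theta> - th l)) * ?r powr (- th l)))"
      using Q by (simp add: ennreal_mult[symmetric] ac_simps)
    finally show "ennreal (2 powr (real k * (\<theta> - th l))) * emeasure (H_meas \<mu> (th l)) (cball x (c * ?r) \<inter> S l)
        \<le> ennreal (Q * 2 powr (real k * \<theta>))"
      by (simp only: two_powr_weight_mult)
  qed
  also have "\<dots> = ennreal (real N * (Q * 2 powr (real k * \<theta>)))"
    using Q by (simp add: ennreal_mult ennreal_of_nat_eq_real_of_nat)
  finally show ?thesis
    unfolding Q_def by (simp add: ac_simps)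
qed

lemma Av_H_meas_le_Av_m_k:
  fixes f :: "'a \<Rightarrow> real"
  assumes f: "loc_integrable (m_k \<mu> N \<theta> th S 0) f" and i: "i \<in> {1..N}" and y: "y \<in> S i"
    and sub: "cball y (2 powr (- real k)) \<subseteq> cball x (c * 2 powr (- real k))"
  shows "Av (H_meas \<mu> (th i)) (cball y (2 powr (- real k)) \<inter> S i) (\<lambda>x. \<bar>f x - a\<bar>)
    \<le> real N * \<Lambda>\<^sup>2 * \<kappa>2 / \<kappa>1 * Av (m_k \<mu> N \<theta> th S k) (cball x (c * 2 powr (- real k))) (\<lambda>x. \<bar>f x - a\<bar>)"
    (is "Av ?H ?G ?g \<le> ?K * Av ?M ?B ?g")
proof (cases "emeasure ?H ?G = 0")
  case True
  then have "Av ?H ?G ?g = 0"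
    by (simp add: Av_def)
  moreover have "0 \<le> ?K * Av ?M ?B ?g"
    using \<kappa>1_pos \<kappa>2_pos by (intro mult_nonneg_nonneg Av_nonneg) simp_all
  ultimately show ?thesis
    by simp
next
  case False
  let ?r = "2 powr (- real k) :: real"
  let ?w = "2 powr (real k * (\<theta> - th i))"
  let ?my = "measure \<mu> (cball y ?r)"
  have r: "0 < ?r" "?r \<le> 1"
    using two_powr_neg_le_one by simp_all
  have my: "0 < ?my"
    by (rule measure_cball_pos) simp
  have f_meas [measurable]: "f \<in> borel_measurable borel"
    using f by (intro borel_measurable_loc_integrable) simp_all
  have "emeasure ?H ?G = H_cod \<mu> (th i) ?G"
    using False by (intro emeasure_H_meas_eq_H_cod) (simp add: zero_less_iff_neq_zero)
  then have "ennreal (\<kappa>1 * ?my * ?r powr (- th i)) \<le> emeasure ?H ?G"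
    using H_cod_lower[OF i y r] by simp
  moreover have "y \<in> cball y ?r"
    using r by simp
  then have "y \<in> ?B"
    using sub by blast
  then have B_le: "emeasure ?M ?B \<le> ennreal (real N * \<Lambda>\<^sup>2 * \<kappa>2 * ?my * 2 powr (real k * \<theta>))"
    by (rule emeasure_m_k_cball_le)
  moreover have "integrable ?M (\<lambda>x. indicator ?B x * ?g x)"
    using loc_integrable_m_k[OF f, of k] B_le
    by (intro integrable_indicator_abs_diff) (auto simp: loc_integrable_def less_top[symmetric] top_unique)
  moreover have "ennreal ?w * (\<integral>\<^sup>+x. ennreal (indicator ?G x * ?g x) \<partial>?H)
      \<le> (\<integral>\<^sup>+x. ennreal (indicator ?B x * ?g x) \<partial>?M)"
    using sub by (intro nn_integral_restrict_H_meas_le_m_k[OF i]) simp_all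
  ultimately have "Av ?H ?G ?g
      \<le> real N * \<Lambda>\<^sup>2 * \<kappa>2 * ?my * 2 powr (real k * \<theta>) / (?w * (\<kappa>1 * ?my * ?r powr (- th i))) * Av ?M ?B ?g"
    using S_borel[OF i] f_meas \<kappa>1_pos \<kappa>2_pos my
    by (intro Av_le_Av_of_nn_integral_le) simp_all
  also have "real N * \<Lambda>\<^sup>2 * \<kappa>2 * ?my * 2 powr (real k * \<theta>) / (?w * (\<kappa>1 * ?my * ?r powr (- th i))) = ?K"
    using my \<kappa>1_pos two_powr_weight_mult[of k \<theta> "th i"] by (simp add: field_simps)
  finally show ?thesis .
qed

lemma A_ijk_le_Osc:
  fixes f :: "'a \<Rightarrow> real"
  assumes f: "loc_integrable (m_k \<mu> N \<theta> th S 0) f" and i: "i \<in> {1..N}" and j: "j \<in> {1..N}"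
    and y: "y \<in> S i" and z: "z \<in> S j"
    and sub_y: "cball y (2 powr (- real k)) \<subseteq> cball x (c * 2 powr (- real k))"
    and sub_z: "cball z (2 powr (- real k)) \<subseteq> cball x (c * 2 powr (- real k))"
  shows "A_ijk \<mu> th S i j k f y z
    \<le> 2 * (real N * \<Lambda>\<^sup>2 * \<kappa>2 / \<kappa>1) * Osc (m_k \<mu> N \<theta> th S k) f (cball x (c * 2 powr (- real k)))"
proof -
  define K where "K = real N * \<Lambda>\<^sup>2 * \<kappa>2 / \<kappa>1"
  let ?M = "m_k \<mu> N \<theta> th S k" and ?B = "cball x (c * 2 powr (- real k))"
  have K: "0 < K"
    unfolding K_def using i \<Lambda> \<kappa>1_pos \<kappa>2_pos by auto
  have "A_ijk \<mu> th S i j k f y z / (2 * K) \<le> Av ?M ?B (\<lambda>x. \<bar>f x - a\<bar>)" for a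
  proof -
    have "A_ijk \<mu> th S i j k f y z
        \<le> Av (H_meas \<mu> (th i)) (cball y (2 powr (- real k)) \<inter> S i) (\<lambda>x. \<bar>f x - a\<bar>)
          + Av (H_meas \<mu> (th j)) (cball z (2 powr (- real k)) \<inter> S j) (\<lambda>x. \<bar>f x - a\<bar>)"
      unfolding A_ijk_def using S_borel[OF i] S_borel[OF j]
      by (intro Av_Av_abs_diff_le integrable_indicator_abs_diff
          set_integrable_H_meas[OF f i] set_integrable_H_meas[OF f j]) simp_all
    also have "\<dots> \<le> K * Av ?M ?B (\<lambda>x. \<bar>f x - a\<bar>) + K * Av ?M ?B (\<lambda>x. \<bar>f x - a\<bar>)"
      unfolding K_def by (intro add_mono Av_H_meas_le_Av_m_k f i j y z sub_y sub_z)
    finally show ?thesis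
      using K by (simp add: pos_divide_le_eq ac_simps)
  qed
  then have "A_ijk \<mu> th S i j k f y z / (2 * K) \<le> Osc ?M f ?B"
    unfolding Osc_def by (intro cINF_greatest) simp_all
  then show ?thesis
    using K unfolding K_def[symmetric] by (simp add: pos_divide_le_eq mult.commute)
qed

end

end

theorem lemma3p3:
  fixes \<mu> :: "'a::polish_space measure"
    and p \<theta>low \<theta> :: real and N :: nat and th :: "nat \<Rightarrow> real" and S :: "nat \<Rightarrow> 'a set"
  assumes "loc_finite_full_support \<mu>"
    and "unif_loc_doubling \<mu>"
    and "1 < p"
    and "weak_local_poincare \<mu> p"
    and "0 \<le> \<theta>low" and "\<theta>low < min p (Q_lower \<mu>)"
    and "\<theta>low \<le> \<theta>" and "\<theta> < p"
    and "2 \<le> N"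
    and "0 \<le> th 1"
    and "\<And>i j. 1 \<le> i \<Longrightarrow> i < j \<Longrightarrow> j \<le> N \<Longrightarrow> th i < th j"
    and "th N = \<theta>low"
    and "\<And>i. 1 \<le> i \<Longrightarrow> i \<le> N \<Longrightarrow> ADR \<mu> (th i) (S i)"
  shows "\<forall>c\<ge>1. \<exists>C>0. \<forall>i\<in>{1..N}. \<forall>j\<in>{1..N}. \<forall>k::nat. \<forall>y\<in>S i. \<forall>z\<in>S j.
           dist y z \<le> 2 powr (- real k) \<longrightarrow>
           (\<forall>f. loc_integrable (m_k \<mu> N \<theta> th S 0) f \<longrightarrow>
             (\<forall>x. cball y (2 powr (- real k)) \<subseteq> cball x (c * 2 powr (- real k)) \<and>
                  cball z (2 powr (- real k)) \<subseteq> cball x (c * 2 powr (- real k)) \<longrightarrow>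
                  A_ijk \<mu> th S i j k f y z \<le> C * Osc (m_k \<mu> N \<theta> th S k) f (cball x (c * 2 powr (- real k)))))"
proof (intro allI impI)
  fix c :: real
  assume c: "1 \<le> c"
  interpret doubling_metric_measure \<mu>
    using assms(1,2) by unfold_locales
  have ADR: "\<forall>l\<in>{1..N}. ADR \<mu> (th l) (S l)"
    using assms(13) by simp
  obtain \<kappa>1 \<kappa>2 where \<kappa>: "0 < \<kappa>1" "0 < \<kappa>2" "\<forall>l\<in>{1..N}. ADR_bounds \<mu> \<kappa>1 \<kappa>2 (th l) (S l)"
    using ADR_uniform_constants[OF finite_atLeastAtMost ADR] by blast
  interpret ADR_family \<mu> N th S \<kappa>1 \<kappa>2
    using assms(1,2) ADR \<kappa> by unfold_locales (auto simp: ADR_def)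
  obtain \<Lambda> where \<Lambda>: "0 < \<Lambda>"
    "\<And>x \<rho>. 0 < \<rho> \<Longrightarrow> \<rho> \<le> 1 \<Longrightarrow> measure \<mu> (cball x (5 * c * \<rho>)) \<le> \<Lambda> * measure \<mu> (cball x \<rho>)"
    using measure_cball_dilate[of "5 * c"] c by auto
  have "0 < 2 * (real N * \<Lambda>\<^sup>2 * \<kappa>2 / \<kappa>1)"
    using assms(9) \<Lambda>(1) \<kappa> by simp
  with A_ijk_le_Osc[OF c \<Lambda>] show "\<exists>C>0. \<forall>i\<in>{1..N}. \<forall>j\<in>{1..N}. \<forall>k::nat. \<forall>y\<in>S i. \<forall>z\<in>S j.
      dist y z \<le> 2 powr (- real k) \<longrightarrow>
      (\<forall>f. loc_integrable (m_k \<mu> N \<theta> th S 0) f \<longrightarrow>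
        (\<forall>x. cball y (2 powr (- real k)) \<subseteq> cball x (c * 2 powr (- real k)) \<and>
          cball z (2 powr (- real k)) \<subseteq> cball x (c * 2 powr (- real k)) \<longrightarrow>
          A_ijk \<mu> th S i j k f y z \<le> C * Osc (m_k \<mu> N \<theta> th S k) f (cball x (c * 2 powr (- real k)))))"
    by blast
qed

end
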